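(* Let $S\subseteq V$ and $u\in V\setminus S$, and write $\Delta(S,u)=r(S\cup\{u\})-r(S)$. If $S\cap A_u=\emptyset$, then $$\Delta(S,u)=\Big(n_u-\Big|\bigcup_{j\in N_u\cap S}N_j\Big|\Big)\mathbb{P}\{Z_u>\tau\}.$$ If $S\cap A_u\neq\emptyset$, let $v$ be the element of $S\cap A_u$ of maximal depth (the closest ancestor of $u$ in $S$); then $$\Delta(S,u)=\Big(n_u-\Big|\bigcup_{j\in N_u\cap S}N_j\Big|\Big)\Big(\mathbb{P}\{Z_u>\tau\}-\mathbb{P}\{Z_v>\tau\}\Big).$$ In both cases $\Delta(S,u)\ge 0$.
   Context: Let $G=(V,E)$ be a finite tree with $|V|=n$, rooted at a node $s$ (the infection source). For a node $i$: $d_i$ is its depth (number of edges on the path from $s$ to $i$); $A_i$ is the set of ancestors of $i$ (strict, including its parent); $N_i$ is the set of descendants of $i$ (strict, not including $i$); $n_i=|N_i|$. Each edge $e$ carries an independent random variable $X_e\sim\mathrm{Exp}(\lambda)$ with $\lambda>0$, and $Z_i=\sum_{e \text{ on the path from } s \text{ to } i}X_e$ is the infection time of $i$ (so $Z_s=0$; $Z_i$ is a sum of $d_i$ i.i.d. $\mathrm{Exp}(\lambda)$ variables). The immunization time $\tau\ge 0$ is a single random variable, common to all vaccinated nodes and independent of $(X_e)_{e\in E}$. For $S\subseteq V$ (the vaccinated set), a node $i\in S$ becomes immune iff $Z_i>\tau$, and an immune node saves all its descendants. The expected total reward is defined as $r(S)=\mathbb{E}\big[\,\big|\bigcup_{i\in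 S:\,Z_i>\tau}N_i\big|\,\big]$, the expected number of nodes that are descendants of at least one immune vaccinated node. *)

theory Defs
  imports "HOL-Probability.Probability"
begin

(* A finite tree rooted at s, given by a parent map par (par i is the parent of i for i \<noteq> s;
   par s is irrelevant). The edge joining par i and i is identified with its child endpoint i \<in> V - {s}. *)
definition rooted_tree :: "'a set \<Rightarrow> 'a \<Rightarrow> ('a \<Rightarrow> 'a) \<Rightarrow> bool" where
  "rooted_tree V s par \<longleftrightarrow> finite V \<and> s \<in> V \<and> (\<forall>i\<in>V - {s}. par i \<in> V)
     \<and> (\<forall>i\<in>V. \<exists>k. (par ^^ k) i = s)"

definition depth :: "('a \<Rightarrow> 'a) \<Rightarrow> 'a \<Rightarrow> 'a \<Rightarrow> nat" where
  "depth par s i = (LEAST k. (par ^^ k) i = s)"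

definition anc :: "('a \<Rightarrow> 'a) \<Rightarrow> 'a \<Rightarrow> 'a \<Rightarrow> 'a set" where
  "anc par s i = {(par ^^ k) i | k. 1 \<le> k \<and> k \<le> depth par s i}"

definition desc :: "'a set \<Rightarrow> ('a \<Rightarrow> 'a) \<Rightarrow> 'a \<Rightarrow> 'a \<Rightarrow> 'a set" where
  "desc V par s i = {j \<in> V. i \<in> anc par s j}"

definition path_edges :: "('a \<Rightarrow> 'a) \<Rightarrow> 'a \<Rightarrow> 'a \<Rightarrow> 'a set" where
  "path_edges par s i = {(par ^^ k) i | k. k < depth par s i}"

definition infect_time :: "('a \<Rightarrow> 'a) \<Rightarrow> 'a \<Rightarrow> ('a \<Rightarrow> 'w \<Rightarrow> real) \<Rightarrow> 'a \<Rightarrow> 'w \<Rightarrow> real" where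
  "infect_time par s X i \<omega> = (\<Sum>e\<in>path_edges par s i. X e \<omega>)"

definition reward :: "'w measure \<Rightarrow> 'a set \<Rightarrow> ('a \<Rightarrow> 'a) \<Rightarrow> 'a \<Rightarrow> ('a \<Rightarrow> 'w \<Rightarrow> real)
    \<Rightarrow> ('w \<Rightarrow> real) \<Rightarrow> 'a set \<Rightarrow> real" where
  "reward M V par s X \<tau> S = (\<integral>\<omega>. real (card (\<Union>i\<in>{i\<in>S. infect_time par s X i \<omega> > \<tau> \<omega>}.
       desc V par s i)) \<partial>M)"

end

theory Submission
  imports Defs
begin

(* Fix an outcome and call a node immune if Z_i > tau. The delays are nonnegative, so Z increases
   along every root path and the immune nodes are closed under taking descendants. Hence adding u
   to S enlarges the saved set only when u is immune but no vaccinated ancestor of u is, and then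
   it adds N_u minus the part already saved, which consists of the N_j with j a vaccinated
   descendant of u. Taking expectations,
     Delta(S,u) = (n_u - |U_{j in N_u, j in S} N_j|) P{u immune, no vaccinated ancestor immune}.
   If v is the closest vaccinated ancestor, that event is {Z_u > tau >= Z_v}, and Z_v <= Z_u
   turns its probability into a difference. Independence and the exponential law are used only
   for the measurability of tau and the nonnegativity of the delays. *)

lemma (in finite_measure) measure_Diff_AE_subset:
  assumes "A \<in> sets M" and "B \<in> sets M" and "AE x in M. x \<in> B \<longrightarrow> x \<in> A"
  shows "measure M (A - B) = measure M A - measure M B"
proof -
  have "measure M (A \<inter> B) = measure M B"
    using assms by (intro measure_eq_AE) auto
  then show ?thesis
    using finite_measure_Diff'[OF assms(1,2)] by simp
qed

definition covered :: "'a set \<Rightarrow> ('a \<Rightarrow> 'a) \<Rightarrow> 'a \<Rightarrow> 'a set \<Rightarrow> 'a set" where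
  "covered V par s I = (\<Union>i\<in>I. desc V par s i)"

lemma rooted_tree_finite: "rooted_tree V s par \<Longrightarrow> finite V"
  unfolding rooted_tree_def by simp

lemma depth_le_if_funpow_eq_root: "(par ^^ k) x = s \<Longrightarrow> depth par s x \<le> k"
  unfolding depth_def by (rule Least_le)

lemma anc_iff: "a \<in> anc par s x \<longleftrightarrow> (\<exists>k. 1 \<le> k \<and> k \<le> depth par s x \<and> a = (par ^^ k) x)"
  unfolding anc_def by auto

lemma desc_subset_V: "desc V par s i \<subseteq> V"
  unfolding desc_def by auto

context
  fixes V :: "'a set" and s :: 'a and par :: "'a \<Rightarrow> 'a"
  assumes tree: "rooted_tree V s par"
begin

lemma funpow_depth_eq_root: "x \<in> V \<Longrightarrow> (par ^^ depth par s x) x = s"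
  using tree unfolding rooted_tree_def depth_def by (metis (mono_tags, lifting) LeastI)

lemma funpow_in_V: "x \<in> V \<Longrightarrow> k \<le> depth par s x \<Longrightarrow> (par ^^ k) x \<in> V"
proof (induction k)
  case (Suc k)
  then have "(par ^^ k) x \<in> V" and "(par ^^ k) x \<noteq> s"
    using depth_le_if_funpow_eq_root[of _ par _ s] by fastforce+
  then show ?case
    using tree unfolding rooted_tree_def by auto
qed simp

lemma depth_funpow:
  assumes "x \<in> V" and "k \<le> depth par s x"
  shows "depth par s ((par ^^ k) x) = depth par s x - k"
proof (rule antisym)
  have "(par ^^ (depth par s x - k)) ((par ^^ k) x) = s"
    using funpow_depth_eq_root[OF assms(1)] assms(2) by (metis funpow_add le_add_diff_inverse2 o_apply)
  then show "depth par s ((par ^^ k) x) \<le> depth par s x - k"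
    by (rule depth_le_if_funpow_eq_root)
  have "(par ^^ (depth par s ((par ^^ k) x) + k)) x = s"
    using funpow_depth_eq_root[OF funpow_in_V[OF assms]] by (simp add: funpow_add)
  then show "depth par s x - k \<le> depth par s ((par ^^ k) x)"
    using depth_le_if_funpow_eq_root[of _ par _ s] by fastforce
qed

lemma anc_in_V: "x \<in> V \<Longrightarrow> a \<in> anc par s x \<Longrightarrow> a \<in> V"
  using funpow_in_V anc_iff[of _ par s] by auto

lemma depth_anc_less: "x \<in> V \<Longrightarrow> a \<in> anc par s x \<Longrightarrow> depth par s a < depth par s x"
  using depth_funpow anc_iff[of _ par s] by fastforce

lemma funpow_in_anc:
  assumes "x \<in> V" and "k \<le> depth par s x" and "m \<le> depth par s x" and "k < m"
  shows "(par ^^ m) x \<in> anc par s ((par ^^ k) x)"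
proof -
  have "(par ^^ m) x = (par ^^ (m - k)) ((par ^^ k) x)"
    using assms(4) by (metis funpow_add le_add_diff_inverse2 less_imp_le o_apply)
  then show ?thesis
    unfolding anc_iff using assms depth_funpow[OF assms(1,2)] by (intro exI[of _ "m - k"]) auto
qed

lemma anc_trans: "c \<in> V \<Longrightarrow> b \<in> anc par s c \<Longrightarrow> a \<in> anc par s b \<Longrightarrow> a \<in> anc par s c"
proof -
  assume c: "c \<in> V" and b: "b \<in> anc par s c" and a: "a \<in> anc par s b"
  obtain k where k: "1 \<le> k" "k \<le> depth par s c" "b = (par ^^ k) c" using b anc_iff[of _ par s] by auto
  obtain m where m: "1 \<le> m" "m \<le> depth par s b" "a = (par ^^ m) b" using a anc_iff[of _ par s] by auto
  have "a = (par ^^ (m + k)) c" and "m + k \<le> depth par s c"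
    using k m depth_funpow[OF c k(2)] by (auto simp: funpow_add)
  then show ?thesis
    unfolding anc_iff using m by (intro exI[of _ "m + k"]) auto
qed

lemma anc_linear:
  assumes "x \<in> V" and "a \<in> anc par s x" and "b \<in> anc par s x"
  shows "a = b \<or> a \<in> anc par s b \<or> b \<in> anc par s a"
proof -
  obtain k where "k \<le> depth par s x" "a = (par ^^ k) x" using assms(2) anc_iff[of _ par s] by auto
  moreover obtain m where "m \<le> depth par s x" "b = (par ^^ m) x" using assms(3) anc_iff[of _ par s] by auto
  ultimately show ?thesis
    using funpow_in_anc[OF assms(1)] by (cases k m rule: linorder_cases) auto
qed

lemma desc_subset_desc_anc: "i \<in> anc par s j \<Longrightarrow> desc V par s j \<subseteq> desc V par s i"
  unfolding desc_def using anc_trans by auto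

lemma UN_desc_subset_desc: "(\<Union>j\<in>desc V par s u \<inter> S. desc V par s j) \<subseteq> desc V par s u"
  using desc_subset_desc_anc unfolding desc_def by blast

lemma anc_of_deepest_anc:
  assumes "u \<in> V" and "v \<in> A \<inter> anc par s u"
    and deepest: "\<forall>w\<in>A \<inter> anc par s u. depth par s w \<le> depth par s v"
    and "a \<in> A \<inter> anc par s u"
  shows "a = v \<or> a \<in> anc par s v"
proof -
  have "a = v \<or> a \<in> anc par s v \<or> v \<in> anc par s a"
    using anc_linear[OF assms(1)] assms(2,4) by blast
  moreover have "v \<notin> anc par s a"
    using depth_anc_less[OF anc_in_V[OF assms(1)]] deepest assms(4) by (meson IntD2 leD)
  ultimately show ?thesis by blast
qed

lemma path_edges_subset: "x \<in> V \<Longrightarrow> path_edges par s x \<subseteq> V - {s}"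
  unfolding path_edges_def using funpow_in_V depth_le_if_funpow_eq_root[of _ par _ s] by fastforce

lemma path_edges_anc_subset:
  assumes "x \<in> V" and "a \<in> anc par s x"
  shows "path_edges par s a \<subseteq> path_edges par s x"
proof
  fix e assume "e \<in> path_edges par s a"
  then obtain m where m: "m < depth par s a" "e = (par ^^ m) a"
    unfolding path_edges_def by auto
  obtain k where k: "1 \<le> k" "k \<le> depth par s x" "a = (par ^^ k) x"
    using assms(2) anc_iff[of _ par s] by auto
  have "m + k < depth par s x" "e = (par ^^ (m + k)) x"
    using m k depth_funpow[OF assms(1) k(2)] by (auto simp: funpow_add)
  then show "e \<in> path_edges par s x"
    unfolding path_edges_def by blast
qed

lemma infect_time_anc_le:
  assumes "x \<in> V" and "a \<in> anc par s x" and "\<And>e. e \<in> V - {s} \<Longrightarrow> X e \<omega> \<ge> 0"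
  shows "infect_time par s X a \<omega> \<le> infect_time par s X x \<omega>"
  unfolding infect_time_def
  using path_edges_anc_subset[OF assms(1,2)] path_edges_subset[OF assms(1)] assms(3)
  by (intro sum_mono2) (auto simp: path_edges_def)

lemma desc_inter_covered:
  assumes closed: "\<And>i j. immune i \<Longrightarrow> j \<in> desc V par s i \<Longrightarrow> immune j"
    and "immune u" and "u \<notin> S" and unshadowed: "\<forall>a\<in>S \<inter> anc par s u. \<not> immune a"
  shows "desc V par s u \<inter> covered V par s {i\<in>S. immune i} = (\<Union>j\<in>desc V par s u \<inter> S. desc V par s j)"
proof
  show "(\<Union>j\<in>desc V par s u \<inter> S. desc V par s j) \<subseteq> desc V par s u \<inter> covered V par s {i\<in>S. immune i}"
    using UN_desc_subset_desc closed \<open>immune u\<close> unfolding covered_def by blast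
next
  show "desc V par s u \<inter> covered V par s {i\<in>S. immune i} \<subseteq> (\<Union>j\<in>desc V par s u \<inter> S. desc V par s j)"
  proof
    fix x assume "x \<in> desc V par s u \<inter> covered V par s {i\<in>S. immune i}"
    then obtain i where i: "i \<in> S" "immune i" "x \<in> desc V par s i"
      and x: "x \<in> V" "u \<in> anc par s x"
      unfolding covered_def desc_def by auto
    have "i \<in> anc par s x" using i(3) unfolding desc_def by simp
    then have "i = u \<or> i \<in> anc par s u \<or> u \<in> anc par s i"
      using anc_linear[OF x(1)] x(2) by blast
    then have "i \<in> desc V par s u"
      using i \<open>u \<notin> S\<close> unshadowed anc_in_V[OF x(1) \<open>i \<in> anc par s x\<close>]
      unfolding desc_def by blast
    then show "x \<in> (\<Union>j\<in>desc V par s u \<inter> S. desc V par s j)"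
      using i by blast
  qed
qed

lemma card_covered_insert:
  assumes closed: "\<And>i j. immune i \<Longrightarrow> j \<in> desc V par s i \<Longrightarrow> immune j" and "u \<notin> S"
  shows "real (card (covered V par s {i\<in>insert u S. immune i}))
      - real (card (covered V par s {i\<in>S. immune i}))
    = (if immune u \<and> (\<forall>a\<in>S \<inter> anc par s u. \<not> immune a)
       then real (card (desc V par s u)) - real (card (\<Union>j\<in>desc V par s u \<inter> S. desc V par s j))
       else 0)"
proof -
  let ?C = "covered V par s {i\<in>S. immune i}" and ?D = "desc V par s u"
  have "?C \<subseteq> V" "?D \<subseteq> V"
    unfolding covered_def using desc_subset_V[of V par s] by blast+
  then have fin: "finite ?C" "finite ?D"
    using rooted_tree_finite[OF tree] finite_subset by blast+
  have insert_eq: "covered V par s {i\<in>insert u S. immune i} = (if immune u then ?D \<union> ?C else ?C)"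
    unfolding covered_def by auto
  consider (exposed) "immune u" "\<forall>a\<in>S \<inter> anc par s u. \<not> immune a"
    | (shadowed) a where "immune u" "a \<in> S \<inter> anc par s u" "immune a"
    | (not_immune) "\<not> immune u"
    by blast
  then show ?thesis
  proof cases
    case exposed
    have "card (?D \<union> ?C) + card (\<Union>j\<in>?D \<inter> S. desc V par s j) = card ?D + card ?C"
      using card_Un_Int[OF fin(2,1)] desc_inter_covered[OF closed exposed(1) \<open>u \<notin> S\<close> exposed(2)]
      by simp
    then show ?thesis
      using exposed insert_eq by simp
  next
    case shadowed
    have "?D \<subseteq> ?C"
      using desc_subset_desc_anc[of a u] shadowed unfolding covered_def by blast
    then show ?thesis
      using shadowed insert_eq by (auto simp: Un_absorb1)
  next
    case not_immune
    then show ?thesis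
      using insert_eq by simp
  qed
qed

end

lemma measurable_card_covered:
  assumes "rooted_tree V s par" and "T \<subseteq> V" and "\<And>i. i \<in> T \<Longrightarrow> Measurable.pred M (P i)"
  shows "(\<lambda>\<omega>. real (card (covered V par s {i\<in>T. P i \<omega>}))) \<in> borel_measurable M"
proof -
  have "finite V" using assms(1) by (rule rooted_tree_finite)
  then have "finite T" using assms(2) finite_subset by blast
  have "covered V par s {i\<in>T. P i \<omega>} = {x\<in>V. \<exists>i\<in>T. P i \<omega> \<and> x \<in> desc V par s i}" for \<omega>
    unfolding covered_def desc_def by auto
  then have card_eq: "real (card (covered V par s {i\<in>T. P i \<omega>}))
      = (\<Sum>x\<in>V. if \<exists>i\<in>T. P i \<omega> \<and> x \<in> desc V par s i then 1 else 0)" for \<omega>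
    using \<open>finite V\<close> by (simp add: sum.inter_filter[symmetric])
  have "(\<lambda>\<omega>. \<Sum>x\<in>V. if \<exists>i\<in>T. P i \<omega> \<and> x \<in> desc V par s i then 1 else 0 :: real) \<in> borel_measurable M"
    using \<open>finite T\<close> assms(3) by measurable
  then show ?thesis
    unfolding card_eq .
qed

locale infection_model = prob_space M for M :: "'w measure" +
  fixes V :: "'a set" and s :: 'a and par :: "'a \<Rightarrow> 'a"
    and X :: "'a \<Rightarrow> 'w \<Rightarrow> real" and \<tau> :: "'w \<Rightarrow> real"
  assumes tree: "rooted_tree V s par"
    and measurable_X: "\<And>e. e \<in> V - {s} \<Longrightarrow> X e \<in> borel_measurable M"
    and AE_X_nonneg: "\<And>e. e \<in> V - {s} \<Longrightarrow> AE \<omega> in M. 0 \<le> X e \<omega>"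
    and measurable_\<tau>: "\<tau> \<in> borel_measurable M"
begin

lemmas finite_V = rooted_tree_finite[OF tree]

lemma AE_infect_time_anc_le:
  "AE \<omega> in M. \<forall>x\<in>V. \<forall>a\<in>anc par s x. infect_time par s X a \<omega> \<le> infect_time par s X x \<omega>"
proof -
  have "AE \<omega> in M. \<forall>e\<in>V - {s}. 0 \<le> X e \<omega>"
    using finite_V AE_X_nonneg by (intro AE_finite_allI) auto
  then show ?thesis
    by eventually_elim (auto intro!: infect_time_anc_le[OF tree])
qed

lemma measurable_infect_time: "i \<in> V \<Longrightarrow> infect_time par s X i \<in> borel_measurable M"
  unfolding infect_time_def using measurable_X path_edges_subset[OF tree]
  by (intro borel_measurable_sum) auto

lemma measurable_immune: "i \<in> V \<Longrightarrow> Measurable.pred M (\<lambda>\<omega>. infect_time par s X i \<omega> > \<tau> \<omega>)"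
  using measurable_infect_time measurable_\<tau> by measurable

lemma integrable_card_covered:
  assumes "T \<subseteq> V"
  shows "integrable M (\<lambda>\<omega>. real (card (covered V par s {i\<in>T. infect_time par s X i \<omega> > \<tau> \<omega>})))"
proof (rule integrable_const_bound)
  show "AE \<omega> in M. norm (real (card (covered V par s {i\<in>T. infect_time par s X i \<omega> > \<tau> \<omega>}))) \<le> card V"
    using finite_V desc_subset_V[of V par s] by (auto intro!: card_mono simp: covered_def)
  show "(\<lambda>\<omega>. real (card (covered V par s {i\<in>T. infect_time par s X i \<omega> > \<tau> \<omega>}))) \<in> borel_measurable M"
    using assms by (intro measurable_card_covered[OF tree] measurable_immune) auto
qed

lemma sets_immune_unshadowed:
  assumes "u \<in> V" and "A \<subseteq> V"
  shows "{\<omega>\<in>space M. infect_time par s X u \<omega> > \<tau> \<omega> \<and> (\<forall>a\<in>A. infect_time par s X a \<omega> \<le> \<tau> \<omega>)} \<in> sets M"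
proof -
  have "finite A" using assms(2) finite_V finite_subset by blast
  moreover have "Measurable.pred M (\<lambda>\<omega>. infect_time par s X a \<omega> \<le> \<tau> \<omega>)" if "a \<in> V" for a
    using measurable_infect_time[OF that] measurable_\<tau> by measurable
  ultimately have "Measurable.pred M (\<lambda>\<omega>. \<forall>a\<in>A. infect_time par s X a \<omega> \<le> \<tau> \<omega>)"
    using assms(2) by (intro pred_intros_finite(3)) auto
  with measurable_immune[OF assms(1)] show ?thesis
    unfolding pred_def by (intro sets.sets_Collect_conj)
qed

lemma reward_insert_diff:
  assumes "S \<subseteq> V" and "u \<in> V - S"
  shows "reward M V par s X \<tau> (S \<union> {u}) - reward M V par s X \<tau> S
    = (real (card (desc V par s u)) - real (card (\<Union>j\<in>desc V par s u \<inter> S. desc V par s j)))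
      * prob {\<omega>\<in>space M. infect_time par s X u \<omega> > \<tau> \<omega>
                \<and> (\<forall>a\<in>S \<inter> anc par s u. infect_time par s X a \<omega> \<le> \<tau> \<omega>)}"
    (is "_ = ?gain * prob ?E")
proof -
  let ?Z = "infect_time par s X"
  let ?cov = "\<lambda>T \<omega>. real (card (covered V par s {i\<in>T. ?Z i \<omega> > \<tau> \<omega>}))"
  have SuV: "S \<union> {u} \<subseteq> V" using assms by auto
  have "?E \<in> sets M" using assms by (intro sets_immune_unshadowed) auto
  have "AE \<omega> in M. ?cov (S \<union> {u}) \<omega> - ?cov S \<omega> = ?gain * indicator ?E \<omega>"
    using AE_infect_time_anc_le AE_space
  proof eventually_elim
    case (elim \<omega>)
    have "?Z j \<omega> > \<tau> \<omega>" if "?Z i \<omega> > \<tau> \<omega>" "j \<in> desc V par s i" for i j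
      using elim(1) that unfolding desc_def by force
    from card_covered_insert[OF tree this] show ?case
      using assms elim(2) by (auto simp: not_less indicator_def)
  qed
  then have "(\<integral>\<omega>. ?cov (S \<union> {u}) \<omega> - ?cov S \<omega> \<partial>M) = (\<integral>\<omega>. ?gain * indicator ?E \<omega> \<partial>M)"
    using integrable_card_covered[OF SuV] integrable_card_covered[OF assms(1)] \<open>?E \<in> sets M\<close>
    by (intro integral_cong_AE) auto
  then show ?thesis
    using integrable_card_covered[OF SuV] integrable_card_covered[OF assms(1)]
    by (simp add: reward_def covered_def Int_absorb2)
qed

lemma prob_immune_unshadowed_eq_diff:
  assumes "S \<subseteq> V" and "u \<in> V" and "v \<in> S \<inter> anc par s u"
    and deepest: "\<forall>w\<in>S \<inter> anc par s u. depth par s w \<le> depth par s v"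
  shows "prob {\<omega>\<in>space M. infect_time par s X u \<omega> > \<tau> \<omega>
                \<and> (\<forall>a\<in>S \<inter> anc par s u. infect_time par s X a \<omega> \<le> \<tau> \<omega>)}
    = prob {\<omega>\<in>space M. infect_time par s X u \<omega> > \<tau> \<omega>} - prob {\<omega>\<in>space M. infect_time par s X v \<omega> > \<tau> \<omega>}"
    (is "prob ?E = prob ?U - prob ?V")
proof -
  have "v \<in> V" using assms by auto
  have sets: "?E \<in> sets M" "?U \<in> sets M" "?V \<in> sets M"
    using assms(1,2) \<open>v \<in> V\<close> measurable_immune unfolding pred_def
    by (auto intro: sets_immune_unshadowed)
  have "prob ?E = prob (?U - ?V)"
  proof (rule measure_eq_AE)
    show "AE \<omega> in M. \<omega> \<in> ?E \<longleftrightarrow> \<omega> \<in> ?U - ?V"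
      using AE_infect_time_anc_le
    proof eventually_elim
      case (elim \<omega>)
      have "infect_time par s X a \<omega> \<le> infect_time par s X v \<omega>" if "a \<in> S \<inter> anc par s u" for a
        using anc_of_deepest_anc[OF tree assms(2,3) deepest that] elim \<open>v \<in> V\<close> by auto
      then show ?case using assms(3) by force
    qed
  qed (use sets in auto)
  also have "\<dots> = prob ?U - prob ?V"
  proof (rule measure_Diff_AE_subset)
    show "AE \<omega> in M. \<omega> \<in> ?V \<longrightarrow> \<omega> \<in> ?U"
      using AE_infect_time_anc_le by eventually_elim (use assms(2,3) in force)
  qed (use sets in auto)
  finally show ?thesis .
qed

end

theorem mainTheorem3:
  fixes M :: "'w measure" and V :: "'a set" and s :: 'a and par :: "'a \<Rightarrow> 'a"
    and X :: "'a \<Rightarrow> 'w \<Rightarrow> real" and \<tau> :: "'w \<Rightarrow> real" and l :: real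
    and S :: "'a set" and u :: 'a
  assumes "prob_space M"
    and "rooted_tree V s par"
    and "l > 0"
    and "\<And>e. e \<in> V - {s} \<Longrightarrow> distributed M lborel (X e) (exponential_density l)"
    and "prob_space.indep_vars M (\<lambda>_. borel)
           (\<lambda>k. case k of None \<Rightarrow> \<tau> | Some e \<Rightarrow> X e) (insert None (Some ` (V - {s})))"
    and "AE \<omega> in M. \<tau> \<omega> \<ge> 0"
    and "S \<subseteq> V" and "u \<in> V - S"
  shows
    "(S \<inter> anc par s u = {} \<longrightarrow>
        reward M V par s X \<tau> (S \<union> {u}) - reward M V par s X \<tau> S
        = (real (card (desc V par s u)) - real (card (\<Union>j\<in>desc V par s u \<inter> S. desc V par s j)))
          * measure M {\<omega>\<in>space M. infect_time par s X u \<omega> > \<tau> \<omega>})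
     \<and> (\<forall>v. v \<in> S \<inter> anc par s u \<and> (\<forall>w\<in>S \<inter> anc par s u. depth par s w \<le> depth par s v) \<longrightarrow>
        reward M V par s X \<tau> (S \<union> {u}) - reward M V par s X \<tau> S
        = (real (card (desc V par s u)) - real (card (\<Union>j\<in>desc V par s u \<inter> S. desc V par s j)))
          * (measure M {\<omega>\<in>space M. infect_time par s X u \<omega> > \<tau> \<omega>}
             - measure M {\<omega>\<in>space M. infect_time par s X v \<omega> > \<tau> \<omega>}))
     \<and> reward M V par s X \<tau> (S \<union> {u}) - reward M V par s X \<tau> S \<ge> 0"
proof -
  interpret prob_space M by fact
  have "X e \<in> borel_measurable M" if "e \<in> V - {s}" for e
    using distributed_measurable[OF assms(4)[OF that]] by simp
  moreover have "AE \<omega> in M. 0 \<le> X e \<omega>" if "e \<in> V - {s}" for e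
    using distributed_AE2[OF assms(4)[OF that], of "\<lambda>x. 0 \<le> x"]
    by (auto simp: exponential_density_def not_less)
  moreover have "\<tau> \<in> borel_measurable M"
    using assms(5) unfolding indep_vars_def by force
  ultimately interpret infection_model M V s par X \<tau>
    using assms(2) by unfold_locales auto
  have "u \<in> V" using assms(8) by simp
  note gain = reward_insert_diff[OF assms(7,8)]
  have "card (\<Union>j\<in>desc V par s u \<inter> S. desc V par s j) \<le> card (desc V par s u)"
    using UN_desc_subset_desc[OF tree] finite_subset[OF desc_subset_V finite_V]
    by (rule card_mono[rotated])
  then show ?thesis
    using gain prob_immune_unshadowed_eq_diff[OF assms(7) \<open>u \<in> V\<close>] by auto
qed

end
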